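(* Let $H_1,\dots,H_k$ and $F$ be fixed graphs. Then, as $n\to\infty$, $\mathrm{ex}(n,(H_1,\dots,H_k),F)=\Theta(\max_{i\le k}\mathrm{ex}(n,H_i,F))$ and $\mathrm{ex}^{\mathrm{col}}(n,(H_1,\dots,H_k),F)=\Theta(\max_{i\le k}\mathrm{ex}(n,H_i,F))$.
   Context: For graphs $H,G$, $\mathcal N(H,G)$ denotes the number of (not necessarily induced) subgraphs of $G$ isomorphic to $H$. $\mathrm{ex}(n,H,F)$ is the maximum of $\mathcal N(H,G)$ over all $F$-free graphs $G$ on $n$ vertices. $\mathrm{ex}(n,(H_1,\dots,H_k),F)$ is the maximum of $\sum_{i=1}^k\mathcal N(H_i,G)$ over all $F$-free graphs $G$ on $n$ vertices. For a graph $G$ whose edges are colored with colors $1,\dots,k$, let $G_i$ be the subgraph consisting of the edges of color $i$; $\mathrm{ex}^{\mathrm{col}}(n,(H_1,\dots,H_k),F)$ is the maximum of $\sum_{i=1}^k \mathcal N(H_i,G_i)$ over all $F$-free graphs $G$ on $n$ vertices and all colorings of their edges with colors $1,\dots,k$. *)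

theory Defs
  imports Main "HOL-Library.Landau_Symbols" "HOL-Library.FuncSet"
begin

type_synonym 'a graph = "'a set \<times> 'a set set"

definition verts :: "'a graph \<Rightarrow> 'a set" where "verts G = fst G"
definition edges :: "'a graph \<Rightarrow> 'a set set" where "edges G = snd G"

definition all_edges :: "'a set \<Rightarrow> 'a set set" where
  "all_edges V = {e. \<exists>u v. u \<in> V \<and> v \<in> V \<and> u \<noteq> v \<and> e = {u, v}}"

definition wf_graph :: "'a graph \<Rightarrow> bool" where
  "wf_graph G \<longleftrightarrow> finite (verts G) \<and> edges G \<subseteq> all_edges (verts G)"

definition graph_iso :: "'a graph \<Rightarrow> 'b graph \<Rightarrow> bool" where
  "graph_iso G G' \<longleftrightarrow> (\<exists>f. bij_betw f (verts G) (verts G') \<and>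
     (\<forall>u\<in>verts G. \<forall>v\<in>verts G. {u, v} \<in> edges G \<longleftrightarrow> {f u, f v} \<in> edges G'))"

text \<open>N(H,G): number of (not necessarily induced) subgraphs of G isomorphic to H.\<close>
definition count_sub :: "'a graph \<Rightarrow> 'b graph \<Rightarrow> nat" where
  "count_sub H G = card {S :: 'b graph. wf_graph S \<and> verts S \<subseteq> verts G \<and>
      edges S \<subseteq> edges G \<and> graph_iso H S}"

definition free :: "'a graph \<Rightarrow> 'b graph \<Rightarrow> bool" where
  "free F G \<longleftrightarrow> count_sub F G = 0"

definition host_graphs :: "'b graph \<Rightarrow> nat \<Rightarrow> nat graph set" where
  "host_graphs F n = {G. verts G = {0..<n} \<and> wf_graph G \<and> free F G}"

text \<open>ex(n,(H_0,...,H_{k-1}),F); the max of an empty family is taken as 0.\<close>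
definition ex_multi :: "nat \<Rightarrow> (nat \<Rightarrow> 'a graph) \<Rightarrow> nat \<Rightarrow> 'b graph \<Rightarrow> nat" where
  "ex_multi k H n F = Max (insert 0 {(\<Sum>i<k. count_sub (H i) G) | G. G \<in> host_graphs F n})"

definition ex_single :: "nat \<Rightarrow> 'a graph \<Rightarrow> 'b graph \<Rightarrow> nat" where
  "ex_single n H F = Max (insert 0 {count_sub H G | G. G \<in> host_graphs F n})"

definition colour_class :: "nat graph \<Rightarrow> (nat set \<Rightarrow> nat) \<Rightarrow> nat \<Rightarrow> nat graph" where
  "colour_class G c i = (verts G, {e \<in> edges G. c e = i})"

definition ex_col :: "nat \<Rightarrow> (nat \<Rightarrow> 'a graph) \<Rightarrow> nat \<Rightarrow> 'b graph \<Rightarrow> nat" where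
  "ex_col k H n F = Max (insert 0 {(\<Sum>i<k. count_sub (H i) (colour_class G c i)) | G c.
      G \<in> host_graphs F n \<and> c \<in> edges G \<rightarrow>\<^sub>E {..<k}})"

end

theory Submission
  imports Defs
begin

text \<open>Write \<open>M(n)\<close> for \<open>max\<^sub>i ex(n, H\<^sub>i, F)\<close>. Then \<open>M(n) \<le> ex(n, (H\<^sub>1, \<dots>, H\<^sub>k), F) \<le> k M(n)\<close>:
  an extremal graph for a single \<open>H\<^sub>i\<close> is a candidate for the sum, and every summand is at most
  \<open>M(n)\<close>. The same holds for the coloured version, because colouring every edge with colour \<open>i\<close>
  reproduces the uncoloured count of \<open>H\<^sub>i\<close>, while a colour class of an \<open>F\<close>-free graph is a
  spanning subgraph of it and thus contains no more copies of \<open>H\<^sub>i\<close>. The constants \<open>1\<close> and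
  \<open>k\<close> do not depend on \<open>n\<close>, nor on the graphs being well-formed.\<close>

definition ex_max :: "nat \<Rightarrow> (nat \<Rightarrow> 'a graph) \<Rightarrow> nat \<Rightarrow> 'b graph \<Rightarrow> nat" where
  "ex_max k H n F = Max (insert 0 {ex_single n (H i) F | i. i < k})"

lemma bigtheta_of_nat_sandwich:
  fixes f g :: "'x \<Rightarrow> nat"
  assumes "\<And>x. g x \<le> f x" and "\<And>x. f x \<le> c * g x"
  shows "(\<lambda>x. real (f x)) \<in> \<Theta>[F](\<lambda>x. real (g x))"
proof (rule bigthetaI'[of 1 "real c + 1"])
  show "\<forall>\<^sub>F x in F. 1 * norm (real (g x)) \<le> norm (real (f x)) \<and>
      norm (real (f x)) \<le> (real c + 1) * norm (real (g x))"
  proof (rule always_eventually, intro allI conjI)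
    fix x
    show "1 * norm (real (g x)) \<le> norm (real (f x))" using assms(1) by simp
    have "real (f x) \<le> real c * real (g x)" using assms(2) of_nat_mono by fastforce
    thus "norm (real (f x)) \<le> (real c + 1) * norm (real (g x))" by (simp add: algebra_simps)
  qed
qed simp_all

lemma finite_host_graphs: "finite (host_graphs F n)"
proof (rule finite_subset)
  show "host_graphs F n \<subseteq> Pair {0..<n} ` Pow (Pow {0..<n})"
  proof
    fix G assume "G \<in> host_graphs F n"
    hence "verts G = {0..<n}" and "wf_graph G" by (auto simp: host_graphs_def)
    hence "edges G \<subseteq> Pow {0..<n}" and "G = ({0..<n}, edges G)"
      by (auto simp: wf_graph_def all_edges_def verts_def edges_def prod_eq_iff)
    thus "G \<in> Pair {0..<n} ` Pow (Pow {0..<n})" by blast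
  qed
qed simp

lemma finite_values_on_host_graphs: "finite {f G | G. G \<in> host_graphs F n}"
  unfolding Setcompr_eq_image by (rule finite_imageI[OF finite_host_graphs])

lemma count_sub_mono:
  assumes "wf_graph G" and "verts G' \<subseteq> verts G" and "edges G' \<subseteq> edges G"
  shows "count_sub H G' \<le> count_sub H G"
proof -
  have "edges G \<subseteq> Pow (verts G)" and "finite (verts G)"
    using assms(1) by (auto simp: wf_graph_def all_edges_def)
  hence "finite (Pow (verts G) \<times> Pow (edges G))" by (simp add: finite_subset)
  moreover have "{S. wf_graph S \<and> verts S \<subseteq> verts G \<and> edges S \<subseteq> edges G \<and>
      graph_iso H S} \<subseteq> Pow (verts G) \<times> Pow (edges G)"
    by (auto simp: verts_def edges_def)
  ultimately show ?thesis
    unfolding count_sub_def using assms(2,3)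
    by (intro card_mono) (auto intro: finite_subset)
qed

lemma count_sub_colour_class_le:
  assumes "wf_graph G"
  shows "count_sub H (colour_class G c i) \<le> count_sub H G"
  using assms by (rule count_sub_mono) (auto simp: colour_class_def verts_def edges_def)

lemma count_sub_le_ex_single:
  assumes "G \<in> host_graphs F n"
  shows "count_sub H G \<le> ex_single n H F"
  unfolding ex_single_def using assms finite_values_on_host_graphs
  by (intro Max_ge) blast+

lemma ex_single_le:
  assumes "\<And>G. G \<in> host_graphs F n \<Longrightarrow> count_sub H G \<le> m"
  shows "ex_single n H F \<le> m"
  unfolding ex_single_def using assms finite_values_on_host_graphs
  by (subst Max_le_iff) blast+

lemma ex_single_le_ex_max:
  assumes "i < k"
  shows "ex_single n (H i) F \<le> ex_max k H n F"
  unfolding ex_max_def using assms by (intro Max_ge) auto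

lemma ex_max_le:
  assumes "\<And>i. i < k \<Longrightarrow> ex_single n (H i) F \<le> m"
  shows "ex_max k H n F \<le> m"
  unfolding ex_max_def using assms by (subst Max_le_iff) auto

lemma count_sub_le_ex_max:
  assumes "G \<in> host_graphs F n" and "i < k"
  shows "count_sub (H i) G \<le> ex_max k H n F"
  using count_sub_le_ex_single[OF assms(1)] ex_single_le_ex_max[OF assms(2)] by (rule order.trans)

lemma colour_sum_le_ex_max:
  assumes "G \<in> host_graphs F n"
  shows "(\<Sum>i<k. count_sub (H i) (colour_class G c i)) \<le> k * ex_max k H n F"
proof -
  have "wf_graph G" using assms by (simp add: host_graphs_def)
  hence "count_sub (H i) (colour_class G c i) \<le> ex_max k H n F" if "i < k" for i
    using count_sub_colour_class_le count_sub_le_ex_max[OF assms that] order.trans by metis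
  hence "(\<Sum>i<k. count_sub (H i) (colour_class G c i)) \<le> (\<Sum>i<k. ex_max k H n F)"
    by (intro sum_mono) simp
  thus ?thesis by simp
qed

lemma ex_multi_bounds:
  "ex_max k H n F \<le> ex_multi k H n F \<and> ex_multi k H n F \<le> k * ex_max k H n F"
proof
  define A where "A = {(\<Sum>i<k. count_sub (H i) G) | G. G \<in> host_graphs F n}"
  have finite_A: "finite (insert 0 A)"
    unfolding A_def using finite_values_on_host_graphs by (rule finite.insertI)
  have ex_multi_A: "ex_multi k H n F = Max (insert 0 A)" unfolding ex_multi_def A_def ..
  show "ex_max k H n F \<le> ex_multi k H n F"
  proof (intro ex_max_le ex_single_le)
    fix i G assume "i < k" and G: "G \<in> host_graphs F n"
    have "count_sub (H i) G \<le> (\<Sum>j<k. count_sub (H j) G)"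
      using \<open>i < k\<close> by (intro member_le_sum) auto
    also have "\<dots> \<le> ex_multi k H n F"
      unfolding ex_multi_A by (rule Max_ge[OF finite_A]) (unfold A_def, use G in blast)
    finally show "count_sub (H i) G \<le> ex_multi k H n F" .
  qed
  have "(\<Sum>i<k. count_sub (H i) G) \<le> (\<Sum>i<k. ex_max k H n F)" if "G \<in> host_graphs F n" for G
    using count_sub_le_ex_max[OF that] by (intro sum_mono) simp
  thus "ex_multi k H n F \<le> k * ex_max k H n F"
    unfolding ex_multi_A using finite_A by (subst Max_le_iff) (auto simp: A_def)
qed

lemma ex_col_bounds:
  "ex_max k H n F \<le> ex_col k H n F \<and> ex_col k H n F \<le> k * ex_max k H n F"
proof
  define B where "B = {(\<Sum>i<k. count_sub (H i) (colour_class G c i)) | G c.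
      G \<in> host_graphs F n \<and> c \<in> edges G \<rightarrow>\<^sub>E {..<k}}"
  have B_bounded: "\<forall>x\<in>insert 0 B. x \<le> k * ex_max k H n F"
    unfolding B_def using colour_sum_le_ex_max by blast
  hence finite_B: "finite (insert 0 B)" by (auto intro: finite_subset[of _ "{..k * ex_max k H n F}"])
  have ex_col_B: "ex_col k H n F = Max (insert 0 B)" unfolding ex_col_def B_def ..
  show "ex_col k H n F \<le> k * ex_max k H n F"
    unfolding ex_col_B using finite_B B_bounded by (subst Max_le_iff) auto
  show "ex_max k H n F \<le> ex_col k H n F"
  proof (intro ex_max_le ex_single_le)
    fix i G assume "i < k" and G: "G \<in> host_graphs F n"
    define c where "c = restrict (\<lambda>_. i) (edges G)"
    have c: "c \<in> edges G \<rightarrow>\<^sub>E {..<k}" using \<open>i < k\<close> by (auto simp: c_def)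
    have "colour_class G c i = G"
      by (cases G) (auto simp: colour_class_def c_def verts_def edges_def)
    hence "count_sub (H i) G = count_sub (H i) (colour_class G c i)" by simp
    also have "\<dots> \<le> (\<Sum>j<k. count_sub (H j) (colour_class G c j))"
      using \<open>i < k\<close> by (intro member_le_sum) auto
    also have "\<dots> \<le> ex_col k H n F"
      unfolding ex_col_B by (rule Max_ge[OF finite_B]) (unfold B_def, use G c in blast)
    finally show "count_sub (H i) G \<le> ex_col k H n F" .
  qed
qed

theorem mainTheorem2:
  fixes k :: nat and H :: "nat \<Rightarrow> 'a graph" and F :: "'b graph"
  assumes "\<forall>i<k. wf_graph (H i)" and "wf_graph F"
  shows "(\<lambda>n. real (ex_multi k H n F)) \<in> \<Theta>(\<lambda>n. real (Max (insert 0 {ex_single n (H i) F | i. i < k}))) \<and>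
         (\<lambda>n. real (ex_col k H n F)) \<in> \<Theta>(\<lambda>n. real (Max (insert 0 {ex_single n (H i) F | i. i < k})))"
  unfolding ex_max_def[symmetric]
  using ex_multi_bounds[of k H _ F] ex_col_bounds[of k H _ F]
  by (auto intro!: bigtheta_of_nat_sandwich)

end
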